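(* Let $n\ge2$, $\rho>0$ and $m\in\mathbb R$. Then $$M\Big(\sum_{k=0}^{n-1}\frac1{k+1}\binom{n-1}{k}(z\rho^{1-m})^k\Big)=\frac1n\rho^{(1-m)(n-1)}\prod_{\substack{1\le k\le n-1:\\ \rho^{m-1}2\sin(\pi k/n)\ge1}}\rho^{m-1}\,2\sin\frac{\pi k}{n}.$$
   Context: For a function $h$ continuous and nonvanishing almost everywhere on the unit circle, $M(h)=\exp\big(\frac1{2\pi}\int_0^{2\pi}\log|h(e^{i\theta})|\,d\theta\big)$; here $M$ is applied to the polynomial in the variable $z$. *)

theory Defs
  imports "HOL-Analysis.Analysis"
begin

definition mahler_measure :: "(complex \<Rightarrow> complex) \<Rightarrow> real" where
  "mahler_measure h =
     exp (1 / (2 * pi) * integral {0..2*pi} (\<lambda>\<theta>. ln (cmod (h (cis \<theta>)))))"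

end

theory Submission
  imports Defs
begin

text \<open>With w = z rho^(1-m) and zeta = e^(2 pi i/n), the polynomial is
  ((1 + w)^n - 1) / (n w) = (1/n) prod_{k=1}^{n-1} (w - (zeta^k - 1)).
  Up to the constant rho^((1-m)(n-1))/n it is therefore monic in z with roots
  (zeta^k - 1) rho^(m-1), of modulus rho^(m-1) 2 sin(pi k/n), and the claim is Jensen's
  formula: the mean of log |e^(it) - a| over the circle is log max(1, |a|).
  For |a| < 1 this follows from the power series of Log(1 - conj a e^(it)), for |a| > 1
  by factoring out a, and for |a| = 1 by monotone convergence.\<close>

lemma has_integral_cis_power:
  assumes "j \<ge> 1"
  shows "((\<lambda>t. cis t ^ j) has_integral 0) {0..2*pi}"
proof -
  define F where "F = (\<lambda>z::complex. exp (\<i> * of_nat j * z) / (\<i> * of_nat j))"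
  have cis_power: "cis t ^ j = exp (\<i> * of_nat j * of_real t)" for t
    by (simp add: cis_conv_exp exp_of_nat_mult[symmetric] mult_ac)
  have "((\<lambda>t. cis t ^ j) has_integral (F (of_real (2*pi)) - F (of_real 0))) {0..2*pi}"
  proof (rule fundamental_theorem_of_calculus)
    fix t :: real
    have "(F has_field_derivative exp (\<i> * of_nat j * of_real t)) (at (of_real t))"
      unfolding F_def using assms by (auto intro!: derivative_eq_intros simp: field_simps)
    from has_vector_derivative_real_field[OF this]
    show "((\<lambda>x. F (of_real x)) has_vector_derivative cis t ^ j) (at t within {0..2*pi})"
      by (simp add: cis_power)
  qed simp
  moreover have "exp (\<i> * of_nat j * of_real (2*pi)) = 1"
    by (metis cis_power cis_2pi power_one)
  ultimately show ?thesis by (simp add: F_def)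
qed

lemma has_integral_Ln_one_minus_cis:
  assumes b: "cmod b < 1"
  shows "((\<lambda>t. Ln (1 - b * cis t)) has_integral 0) {0..2*pi}"
proof -
  define f where "f = (\<lambda>i t. - (b ^ i / of_nat i) * cis t ^ i)"
  have f_int: "(f i has_integral 0) {0..2*pi}" for i
  proof (cases "i = 0")
    case False
    then show ?thesis
      using has_integral_mult_right[OF has_integral_cis_power, of i "- (b ^ i / of_nat i)"]
      by (simp add: f_def)
  qed (simp add: f_def)
  have f_sums: "(\<lambda>i. f i t) sums Ln (1 - b * cis t)" for t
    using Ln_series'[of "- (b * cis t)"] b by (simp add: f_def norm_mult power_mult_distrib)
  have "uniform_limit {0..2*pi} (\<lambda>n t. \<Sum>i<n. f i t) (\<lambda>t. \<Sum>i. f i t) sequentially"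
  proof (rule Weierstrass_m_test)
    show "summable (\<lambda>i. cmod b ^ i)" using b by simp
    show "cmod (f i t) \<le> cmod b ^ i" for i t
      by (cases "i = 0") (auto simp: f_def norm_mult norm_divide norm_power divide_le_eq mult_le_cancel_left1)
  qed
  moreover have "continuous_on {0..2*pi} (\<lambda>t. \<Sum>i<n. f i t)" for n
    unfolding f_def by (intro continuous_intros)
  ultimately obtain I J where
    I: "\<And>n. ((\<lambda>t. \<Sum>i<n. f i t) has_integral I n) {0..2*pi}" and
    J: "((\<lambda>t. \<Sum>i. f i t) has_integral J) {0..2*pi}" and
    "I \<longlonglongrightarrow> J"
    by (rule uniform_limit_integral) auto
  moreover have "I = (\<lambda>n. 0)"
    using has_integral_unique[OF I has_integral_sum[OF _ f_int, of "{..<_}"]] by fastforce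
  ultimately have "J = 0"
    by (simp add: LIMSEQ_const_iff)
  with J show ?thesis
    using f_sums by (simp add: sums_iff)
qed

lemma one_minus_mult_cis_neq_zero:
  assumes "cmod b < 1"
  shows "1 - b * cis t \<noteq> 0"
proof
  assume "1 - b * cis t = 0"
  then have "cmod (b * cis t) = 1" by simp
  with assms show False by (simp add: norm_mult)
qed

lemma has_integral_ln_norm_one_minus_cis:
  assumes b: "cmod b < 1"
  shows "((\<lambda>t. ln (cmod (1 - b * cis t))) has_integral 0) {0..2*pi}"
  using has_integral_Re[OF has_integral_Ln_one_minus_cis[OF b]] one_minus_mult_cis_neq_zero[OF b]
  by simp

lemma has_integral_ln_norm_cis_minus_inside:
  assumes a: "cmod a < 1"
  shows "((\<lambda>t. ln (cmod (cis t - a))) has_integral 0) {0..2*pi}"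
proof -
  have "cmod (cis t - a) = cmod (1 - cnj a * cis t)" for t
  proof -
    have "cis t - a = cis t * (1 - a * cis (-t))" by (simp add: algebra_simps cis_mult)
    then have "cmod (cis t - a) = cmod (cnj (1 - a * cis (-t)))"
      by (simp only: norm_mult norm_cis complex_mod_cnj mult_1_left)
    also have "cnj (1 - a * cis (-t)) = 1 - cnj a * cis t" by (simp add: cis_cnj)
    finally show ?thesis .
  qed
  with has_integral_ln_norm_one_minus_cis[of "cnj a"] a show ?thesis by simp
qed

lemma has_integral_ln_norm_cis_minus_outside:
  assumes a: "cmod a > 1"
  shows "((\<lambda>t. ln (cmod (cis t - a))) has_integral 2 * pi * ln (cmod a)) {0..2*pi}"
proof -
  have a0: "a \<noteq> 0" and ia: "cmod (inverse a) < 1"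
    using a by (auto simp: norm_inverse inverse_less_1_iff)
  have "cmod (1 - inverse a * cis t) > 0" for t
    using one_minus_mult_cis_neq_zero[OF ia] by simp
  moreover have "cis t - a = - a * (1 - inverse a * cis t)" for t
    using a0 by (simp add: algebra_simps)
  ultimately have split: "ln (cmod (cis t - a)) = ln (cmod a) + ln (cmod (1 - inverse a * cis t))" for t
    using a0 by (simp add: norm_mult ln_mult)
  have "((\<lambda>t. ln (cmod a) + ln (cmod (1 - inverse a * cis t))) has_integral 2 * pi * ln (cmod a) + 0) {0..2*pi}"
    using has_integral_const_real[of "ln (cmod a)" 0 "2*pi"]
    by (intro has_integral_add has_integral_ln_norm_one_minus_cis ia) (simp add: mult_ac)
  then show ?thesis by (simp add: split)
qed

lemma negligible_cis_preimage: "negligible {t. cis t = z}"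
proof (cases "\<exists>t0. cis t0 = z")
  case True
  then obtain t0 where t0: "cis t0 = z" by blast
  have "{t. cis t = z} \<subseteq> range (\<lambda>n::int. t0 + 2 * real_of_int n * pi)"
  proof
    fix t assume "t \<in> {t. cis t = z}"
    then have "exp (\<i> * of_real t) = exp (\<i> * of_real t0)" using t0 by (simp add: cis_conv_exp)
    then obtain n :: int where n: "\<i> * of_real t = \<i> * of_real t0 + (of_int (2 * n) * pi) * \<i>"
      by (auto simp: exp_eq)
    have "t = Im (\<i> * of_real t)" by simp
    also have "\<dots> = t0 + 2 * real_of_int n * pi" by (subst n) simp
    finally show "t \<in> range (\<lambda>n::int. t0 + 2 * real_of_int n * pi)" by blast
  qed
  then have "countable {t. cis t = z}" by (rule countable_subset) simp
  then have "negligible (\<Union>t\<in>{t. cis t = z}. {t})" by (intro negligible_countable_Union) auto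
  then show ?thesis by simp
qed simp

lemma norm_minus_scaled_unit_power2:
  assumes z: "cmod z = 1" and a: "cmod a = 1"
  shows "cmod (z - of_real s * a) ^ 2 = 1 - 2 * s * Re (cnj a * z) + s ^ 2"
proof -
  define w where "w = cnj a * z"
  have "a * cnj a = 1" using a by (simp add: complex_mult_cnj cmod_power2[symmetric])
  then have "z - of_real s * a = a * (w - of_real s)" by (simp add: w_def algebra_simps)
  then have "cmod (z - of_real s * a) ^ 2 = (Re w - s) ^ 2 + Im w ^ 2"
    by (simp add: norm_mult a cmod_power2)
  moreover have "cmod w = 1" using z a by (simp add: w_def norm_mult)
  then have "Re w ^ 2 + Im w ^ 2 = 1" by (simp add: cmod_power2[symmetric])
  ultimately show ?thesis unfolding w_def[symmetric] by (simp add: power2_eq_square algebra_simps)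
qed

lemma norm_minus_scaled_unit_power2_div_antimono:
  assumes "cmod z = 1" "cmod a = 1" "0 < s" "s \<le> s'" "s' \<le> 1"
  shows "cmod (z - of_real s' * a) ^ 2 / s' \<le> cmod (z - of_real s * a) ^ 2 / s"
proof -
  define u where "u = Re (cnj a * z)"
  have expand: "cmod (z - of_real x * a) ^ 2 / x = 1 / x + x - 2 * u" if "x > 0" for x
    using that unfolding norm_minus_scaled_unit_power2[OF assms(1,2)] u_def[symmetric]
    by (simp add: field_simps power2_eq_square)
  have "(1 / s + s) - (1 / s' + s') = (s' - s) * (1 - s * s') / (s * s')"
    using assms by (simp add: field_simps)
  also have "\<dots> \<ge> 0"
    using assms by (intro divide_nonneg_pos mult_nonneg_nonneg) (auto intro: mult_le_one)
  finally show ?thesis using assms by (simp add: expand)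
qed

text \<open>Approximate a from inside by r a with r increasing to 1: the functions
  ln (|e^(it) - r a|^2 / r) / 2 decrease in r, and by the inside case their integrals
  are -pi ln r, which tends to 0; monotone convergence then applies off the null set
  where e^(it) = a.\<close>
lemma has_integral_ln_norm_cis_minus_unit:
  assumes a: "cmod a = 1"
  shows "((\<lambda>t. ln (cmod (cis t - a))) has_integral 0) {0..2*pi}"
proof -
  define S where "S = {0..2*pi} - {t. cis t = a}"
  have spike_S: "(f has_integral I) {0..2*pi} \<longleftrightarrow> (f has_integral I) S" for f :: "real \<Rightarrow> real" and I
    by (rule has_integral_spike_set_eq; rule negligible_subset[OF negligible_cis_preimage[of a]])
       (auto simp: S_def)
  define r :: "nat \<Rightarrow> real" where "r k = real (Suc k) / real (Suc (Suc k))" for k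
  have r: "0 < r k" "r k < 1" "r k \<le> r (Suc k)" for k
    by (auto simp: r_def field_simps)
  have "r \<longlonglongrightarrow> 1"
    unfolding r_def by (rule LIMSEQ_Suc[OF LIMSEQ_n_over_Suc_n])
  have nonzero: "cis t - of_real (r k) * a \<noteq> 0" for t k
  proof
    assume "cis t - of_real (r k) * a = 0"
    then have "cmod (cis t) = cmod (of_real (r k) * a)" by simp
    with r[of k] a show False by (simp add: norm_mult)
  qed
  define f where "f k t = ln (cmod (cis t - of_real (r k) * a) ^ 2 / r k) / 2" for k t
  have f_int: "(f k has_integral - pi * ln (r k)) S" for k
  proof -
    have "cmod (of_real (r k) * a) < 1" using r[of k] a by (simp add: norm_mult)
    from has_integral_diff[OF has_integral_ln_norm_cis_minus_inside[OF this]
        has_integral_const_real[of "ln (r k) / 2" 0 "2*pi"]]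
    have "((\<lambda>t. ln (cmod (cis t - of_real (r k) * a)) - ln (r k) / 2) has_integral - pi * ln (r k))
        {0..2*pi}" by simp
    moreover have "f k = (\<lambda>t. ln (cmod (cis t - of_real (r k) * a)) - ln (r k) / 2)"
      using nonzero r[of k] by (simp add: fun_eq_iff f_def ln_div ln_realpow)
    ultimately show ?thesis by (simp add: spike_S)
  qed
  have f_antimono: "f (Suc k) t \<le> f k t" for k t
    unfolding f_def using nonzero[of t "Suc k"] r[of k] r[of "Suc k"] a
    by (intro divide_right_mono ln_mono norm_minus_scaled_unit_power2_div_antimono) auto
  have f_lim: "(\<lambda>k. f k t) \<longlonglongrightarrow> ln (cmod (cis t - a))" if "t \<in> S" for t
  proof -
    have pos: "cmod (cis t - a) > 0" using that by (simp add: S_def)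
    have "(\<lambda>k. f k t) \<longlonglongrightarrow> ln (cmod (cis t - of_real 1 * a) ^ 2 / 1) / 2"
      unfolding f_def using \<open>r \<longlonglongrightarrow> 1\<close> pos by (intro tendsto_intros) auto
    then show ?thesis using pos by (simp add: ln_realpow)
  qed
  have "(\<lambda>k. integral S (f k)) \<longlonglongrightarrow> 0"
  proof -
    have "(\<lambda>k. - pi * ln (r k)) \<longlonglongrightarrow> - pi * ln 1"
      using \<open>r \<longlonglongrightarrow> 1\<close> by (intro tendsto_intros) auto
    then show ?thesis using integral_unique[OF f_int] by simp
  qed
  moreover from this have "bounded (range (\<lambda>k. integral S (f k)))"
    by (intro convergent_imp_bounded) (auto simp: convergent_def)
  then have "(\<lambda>t. ln (cmod (cis t - a))) integrable_on S \<and>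
      (\<lambda>k. integral S (f k)) \<longlonglongrightarrow> integral S (\<lambda>t. ln (cmod (cis t - a)))"
    using f_int f_antimono f_lim
    by (intro monotone_convergence_decreasing) auto
  ultimately show ?thesis
    by (metis LIMSEQ_unique has_integral_integral spike_S)
qed

lemma has_integral_ln_norm_cis_minus:
  "((\<lambda>t. ln (cmod (cis t - a))) has_integral 2 * pi * ln (max 1 (cmod a))) {0..2*pi}"
proof -
  consider "cmod a < 1" | "cmod a = 1" | "cmod a > 1" by linarith
  then show ?thesis
    by cases (simp_all add: has_integral_ln_norm_cis_minus_inside
        has_integral_ln_norm_cis_minus_unit has_integral_ln_norm_cis_minus_outside)
qed

lemma mahler_measure_linear_factors:
  assumes K: "finite K" and C: "C \<noteq> 0"
    and h: "\<And>z. cmod z = 1 \<Longrightarrow> h z = C * (\<Prod>k\<in>K. z - a k)"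
  shows "mahler_measure h = cmod C * (\<Prod>k\<in>K. max 1 (cmod (a k)))"
proof -
  define E where "E = (\<Union>k\<in>K. {t. cis t = a k})"
  have "negligible E"
    unfolding E_def using K negligible_cis_preimage by auto
  have ln_h: "ln (cmod (h (cis t))) = ln (cmod C) + (\<Sum>k\<in>K. ln (cmod (cis t - a k)))"
    if "t \<notin> E" for t
  proof -
    have "cmod (cis t - a k) > 0" if "k \<in> K" for k
      using \<open>t \<notin> E\<close> that by (auto simp: E_def)
    then show ?thesis
      using K C by (simp add: h norm_mult prod_norm[symmetric] ln_mult prod_pos ln_prod)
  qed
  have int: "((\<lambda>t. ln (cmod C) + (\<Sum>k\<in>K. ln (cmod (cis t - a k)))) has_integral
          2 * pi * ln (cmod C) + (\<Sum>k\<in>K. 2 * pi * ln (max 1 (cmod (a k))))) {0..2*pi}"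
    using has_integral_const_real[of "ln (cmod C)" 0 "2*pi"]
    by (intro has_integral_add has_integral_sum K has_integral_ln_norm_cis_minus) (simp add: mult_ac)
  have "((\<lambda>t. ln (cmod (h (cis t)))) has_integral
          2 * pi * ln (cmod C) + (\<Sum>k\<in>K. 2 * pi * ln (max 1 (cmod (a k))))) {0..2*pi}"
    by (rule has_integral_spike[OF \<open>negligible E\<close> _ int]) (use ln_h in auto)
  moreover have "2 * pi * ln (cmod C) + (\<Sum>k\<in>K. 2 * pi * ln (max 1 (cmod (a k))))
      = 2 * pi * (ln (cmod C) + (\<Sum>k\<in>K. ln (max 1 (cmod (a k)))))"
    by (simp add: sum_distrib_left distrib_left)
  ultimately show ?thesis
    using K C by (simp add: mahler_measure_def integral_unique exp_add exp_sum)
qed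

text \<open>Both sides are monic of degree n and vanish at the n distinct n-th roots of unity,
  so their difference has degree below n but n roots.\<close>
lemma power_minus_one_eq_prod_roots_unity:
  fixes x :: complex
  assumes n: "n > 0"
  shows "x ^ n - 1 = (\<Prod>k<n. x - cis (2 * pi * real k / real n))"
proof -
  define \<zeta> where "\<zeta> k = cis (2 * pi * real k / real n)" for k
  define p :: "complex poly" where "p = monom 1 n - 1"
  define q :: "complex poly" where "q = (\<Prod>k<n. [:- \<zeta> k, 1:])"
  have "p - q = 0"
  proof (rule ccontr)
    assume pq: "p - q \<noteq> 0"
    have "degree q = n" unfolding q_def by (simp add: degree_prod_sum_eq)
    moreover have "coeff q (degree q) = 1" unfolding q_def by (simp only: lead_coeff_prod) simp
    ultimately have "degree q = n" "coeff q n = 1" by simp_all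
    moreover have "degree p \<le> n" "coeff p n = 1"
      unfolding p_def using n by (auto intro: degree_diff_le simp: degree_monom_le)
    ultimately have "degree (p - q) \<le> n" "coeff (p - q) n = 0"
      by (auto intro: degree_diff_le)
    then have "degree (p - q) < n"
      using pq by (metis le_neq_implies_less leading_coeff_0_iff)
    moreover have "\<zeta> ` {..<n} \<subseteq> {x. poly (p - q) x = 0}"
      using bij_betw_apply[OF Complex.bij_betw_roots_unity[OF n]]
      by (auto simp: \<zeta>_def p_def q_def poly_prod poly_monom)
    then have "card (\<zeta> ` {..<n}) \<le> card {x. poly (p - q) x = 0}"
      by (rule card_mono[OF poly_roots_finite[OF pq]])
    moreover have "card (\<zeta> ` {..<n}) = n"
      using bij_betw_imp_surj_on[OF Complex.bij_betw_roots_unity[OF n]] card_roots_unity_eq[OF n]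
      unfolding \<zeta>_def by simp
    ultimately show False using card_poly_roots_bound[OF pq] by linarith
  qed
  then have "poly p x = poly q x" by simp
  then show ?thesis by (simp add: p_def q_def poly_prod poly_monom \<zeta>_def)
qed

lemma binomial_sum_div_Suc:
  fixes w :: "'a :: real_field"
  shows "of_nat n * w * (\<Sum>k<n. of_real (1 / real (k + 1) * real ((n - 1) choose k)) * w ^ k)
         = (1 + w) ^ n - 1"
proof -
  have "of_nat n * (of_real (1 / real (k + 1) * real ((n - 1) choose k)) :: 'a)
        = of_nat (n choose Suc k)" for k
  proof -
    have "real (Suc k * (n choose Suc k)) = real (n * ((n - 1) choose k))"
      by (simp only: binomial_absorption)
    then have "real n * (1 / real (k + 1) * real ((n - 1) choose k)) = real (n choose Suc k)"
      by (simp add: field_simps)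
    then show ?thesis by (metis of_real_mult of_real_of_nat_eq)
  qed
  then have "of_nat n * w * (\<Sum>k<n. of_real (1 / real (k + 1) * real ((n - 1) choose k)) * w ^ k)
      = (\<Sum>k<n. of_nat (n choose Suc k) * w ^ Suc k)"
    unfolding sum_distrib_left by (intro sum.cong refl) (metis mult.assoc mult.commute power_Suc)
  also have "\<dots> = (\<Sum>j\<le>n. of_nat (n choose j) * w ^ j) - 1"
    by (subst sum.atMost_shift) simp
  also have "\<dots> = (1 + w) ^ n - 1"
    by (subst add.commute) (simp add: binomial_ring)
  finally show ?thesis .
qed

lemma binomial_sum_div_Suc_eq_prod:
  fixes w :: complex
  assumes n: "n > 0" and w: "w \<noteq> 0"
  shows "(\<Sum>k = 0..n-1. of_real (1 / real (k + 1) * real ((n - 1) choose k)) * w ^ k)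
         = 1 / of_nat n * (\<Prod>k = 1..n-1. w - (cis (2 * pi * real k / real n) - 1))"
proof -
  have "{..<n} = insert 0 {1..n-1}" "{0..n-1} = {..<n}" using n by auto
  then have "(1 + w) ^ n - 1 = w * (\<Prod>k = 1..n-1. w - (cis (2 * pi * real k / real n) - 1))"
    by (simp add: power_minus_one_eq_prod_roots_unity[OF n] algebra_simps)
  then show ?thesis
    using binomial_sum_div_Suc[of n w] \<open>{0..n-1} = {..<n}\<close> n w by (simp add: field_simps)
qed

lemma binomial_sum_div_Suc_scaled_eq_prod:
  fixes z :: complex
  assumes n: "n > 0" and c: "c > 0" and z: "z \<noteq> 0"
  shows "(\<Sum>k = 0..n-1. of_real (1 / real (k + 1) * real ((n - 1) choose k)) * (z * of_real c) ^ k)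
         = of_real (c ^ (n - 1) / real n) *
           (\<Prod>k = 1..n-1. z - (cis (2 * pi * real k / real n) - 1) / of_real c)"
proof -
  have "(\<Sum>k = 0..n-1. of_real (1 / real (k + 1) * real ((n - 1) choose k)) * (z * of_real c) ^ k)
      = 1 / of_nat n * (\<Prod>k = 1..n-1. z * of_real c - (cis (2 * pi * real k / real n) - 1))"
    using c z by (intro binomial_sum_div_Suc_eq_prod n) simp
  also have "(\<Prod>k = 1..n-1. z * of_real c - (cis (2 * pi * real k / real n) - 1))
      = (\<Prod>k = 1..n-1. of_real c * (z - (cis (2 * pi * real k / real n) - 1) / of_real c))"
    using c by (intro prod.cong) (auto simp: field_simps)
  finally show ?thesis by (simp add: prod.distrib)
qed

lemma norm_cis_minus_one:
  assumes "sin x \<ge> 0"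
  shows "cmod (cis (2 * x) - 1) = 2 * sin x"
proof -
  have "cmod (cis (2 * x) - 1) ^ 2 = (cos (2 * x) - 1) ^ 2 + sin (2 * x) ^ 2"
    by (simp add: cmod_power2)
  also have "\<dots> = 2 - 2 * cos (2 * x)"
    using sin_cos_squared_add[of "2 * x"] by (simp add: power2_eq_square algebra_simps)
  also have "\<dots> = (2 * sin x) ^ 2"
    by (simp add: cos_double_sin power2_eq_square)
  finally show ?thesis
    by (rule power2_eq_imp_eq) (use assms in auto)
qed

lemma prod_max_one_eq_prod_filter:
  fixes f :: "'a \<Rightarrow> 'b :: linordered_semidom"
  assumes "finite K"
  shows "(\<Prod>k\<in>K. max 1 (f k)) = (\<Prod>k\<in>{k\<in>K. 1 \<le> f k}. f k)"
proof -
  have "(\<Prod>k\<in>K. max 1 (f k)) = (\<Prod>k\<in>{k\<in>K. 1 \<le> f k}. max 1 (f k))"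
    by (rule prod.mono_neutral_right) (auto simp: assms max_def)
  then show ?thesis by simp
qed

theorem lemma4p2:
  fixes n :: nat and \<rho> m :: real
  assumes "n \<ge> 2" and "\<rho> > 0"
  shows "mahler_measure
           (\<lambda>z. \<Sum>k = 0..n-1. of_real (1 / real (k + 1) * real ((n - 1) choose k))
                                 * (z * of_real (\<rho> powr (1 - m))) ^ k)
         = 1 / real n * \<rho> powr ((1 - m) * real (n - 1)) *
           (\<Prod>k \<in> {k. 1 \<le> k \<and> k \<le> n - 1 \<and>
                         \<rho> powr (m - 1) * (2 * sin (pi * real k / real n)) \<ge> 1}.
              \<rho> powr (m - 1) * (2 * sin (pi * real k / real n)))"
proof -
  have n: "n > 0" using assms(1) by simp
  define c where "c = \<rho> powr (1 - m)"
  have c: "c > 0" "\<rho> powr (m - 1) = 1 / c"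
    using assms(2) by (simp_all add: c_def powr_minus_divide[symmetric])
  define x where "x k = \<rho> powr (m - 1) * (2 * sin (pi * real k / real n))" for k
  have norm_root: "cmod ((cis (2 * pi * real k / real n) - 1) / of_real c) = x k"
    if "k \<in> {1..n-1}" for k
  proof -
    have "sin (pi * real k / real n) \<ge> 0"
      using that n by (intro sin_ge_zero) (auto simp: field_simps)
    then show ?thesis
      using norm_cis_minus_one[of "pi * real k / real n"] c by (simp add: x_def norm_divide mult_ac)
  qed
  have "mahler_measure (\<lambda>z. \<Sum>k = 0..n-1. of_real (1 / real (k + 1) * real ((n - 1) choose k))
                                 * (z * of_real c) ^ k)
      = c ^ (n - 1) / real n * (\<Prod>k = 1..n-1. max 1 (x k))"
    using c n norm_root
    by (subst mahler_measure_linear_factors[OF _ _ binomial_sum_div_Suc_scaled_eq_prod])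
       (auto simp: norm_divide norm_power)
  also have "(\<Prod>k = 1..n-1. max 1 (x k)) = (\<Prod>k \<in> {k \<in> {1..n-1}. 1 \<le> x k}. x k)"
    by (rule prod_max_one_eq_prod_filter) simp
  also have "{k \<in> {1..n-1}. 1 \<le> x k} = {k. 1 \<le> k \<and> k \<le> n - 1 \<and> 1 \<le> x k}"
    by auto
  also have "c ^ (n - 1) = \<rho> powr ((1 - m) * real (n - 1))"
    using assms(2) by (simp add: c_def powr_power mult.commute)
  finally show ?thesis by (simp add: c_def x_def)
qed

end
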